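(* Assume $f$ is backward contracting, and for each $\delta>0$ let $W_\delta$ be the pull-back of $\tilde B(2\delta)$ by $f^{n(\delta)-1}$ containing $c$. Then for every sufficiently small $\delta>0$ we have $R(\delta)\ge\delta/\mathrm{diam}(W_\delta)$.
   Context: Standing setting: $d\ge2$, $c\in\mathbb{C}$, $f(z)=z^d+c$, critical point $0$ non-periodic and recurrent, critical value $c$. $\tilde B(\delta)=B(0,\delta^{1/d})$; a pull-back of $V$ by $f^n$ is a connected component of $f^{-n}(V)$. $R(\delta)=\inf\{\delta/\mathrm{diam}(U): U$ a pull-back of $\tilde B(\delta)$ by some $f^n$, $n\ge0$, with $c\in U\}$. $r(\delta)=\sup\{r>0:$ every pull-back $W$ of $\tilde B(\delta r)$ with $\mathrm{dist}(W,c)\le\delta$ has $\mathrm{diam}(W)<\delta\}$; $f$ is backward contracting if $r(\delta)\to\infty$ as $\delta\to0$. $n(\delta)$ is the minimal integer $n\ge1$ with $f^n(0)\in\tilde B(\delta)$. *)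

theory Defs
  imports "HOL-Analysis.Analysis"
begin

definition unicrit :: "nat \<Rightarrow> complex \<Rightarrow> complex \<Rightarrow> complex" where
  "unicrit d c z = z ^ d + c"

definition Btilde :: "nat \<Rightarrow> real \<Rightarrow> complex set" where
  "Btilde d \<delta> = ball 0 (root d \<delta>)"

definition pullback :: "nat \<Rightarrow> complex \<Rightarrow> nat \<Rightarrow> complex set \<Rightarrow> complex set \<Rightarrow> bool" where
  "pullback d c n V U \<longleftrightarrow>
     U \<in> components ((unicrit d c ^^ n) -` V)"

definition crit_nonperiodic :: "nat \<Rightarrow> complex \<Rightarrow> bool" where
  "crit_nonperiodic d c \<longleftrightarrow> (\<forall>n\<ge>1. (unicrit d c ^^ n) 0 \<noteq> 0)"

definition crit_recurrent :: "nat \<Rightarrow> complex \<Rightarrow> bool" where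
  "crit_recurrent d c \<longleftrightarrow>
     (\<forall>\<epsilon>>0. \<forall>N. \<exists>n>N. norm ((unicrit d c ^^ n) 0) < \<epsilon>)"

definition Rfun :: "nat \<Rightarrow> complex \<Rightarrow> real \<Rightarrow> real" where
  "Rfun d c \<delta> = Inf {\<delta> / diameter U | U n. pullback d c n (Btilde d \<delta>) U \<and> c \<in> U}"

definition rfun :: "nat \<Rightarrow> complex \<Rightarrow> real \<Rightarrow> ereal" where
  "rfun d c \<delta> = Sup (ereal ` {r. r > 0 \<and>
      (\<forall>W n. pullback d c n (Btilde d (\<delta> * r)) W \<and> infdist c W \<le> \<delta>
              \<longrightarrow> diameter W < \<delta>)})"

definition backward_contracting :: "nat \<Rightarrow> complex \<Rightarrow> bool" where
  "backward_contracting d c \<longleftrightarrow> ((\<lambda>\<delta>. rfun d c \<delta>) \<longlongrightarrow> \<infinity>) (at_right 0)"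

definition nfun :: "nat \<Rightarrow> complex \<Rightarrow> real \<Rightarrow> nat" where
  "nfun d c \<delta> = (LEAST n. n \<ge> 1 \<and> (unicrit d c ^^ n) 0 \<in> Btilde d \<delta>)"

definition Wset :: "nat \<Rightarrow> complex \<Rightarrow> real \<Rightarrow> complex set" where
  "Wset d c \<delta> = connected_component_set
      ((unicrit d c ^^ (nfun d c \<delta> - 1)) -` Btilde d (2 * \<delta>)) c"

end

theory Submission
  imports Defs
begin

(*
  Let U be any pull-back of B~(delta) by some f^n with c in U, and let N = n(delta).
  The heart of the proof is the inclusion U \<subseteq> W_delta, i.e. f^(N-1)(U) \<subseteq> B~(2 delta).
  Since f^(n+1)(0) = f^n(c) \<in> B~(delta) we have N \<le> n+1.  If N-1 < n, the connected
  set T = f^N(U) lies in a pull-back V of B~(delta r) by f^(n-N), where r > 1 is a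
  contraction factor provided by backward contraction (r(delta) > 1 for small delta).
  V contains p = f^N(c) and |p - c| = |f^N(0)|^d < delta, so diam V < delta and T lies in
  the ball of radius 2 delta about c; since f^{-1}(B(c,t)) = B~(t), this says
  f^(N-1)(U) \<subseteq> B~(2 delta).  Then diam U \<le> diam W_delta (W_delta is bounded), and
  diam U > 0 (U is open), so delta/diam U \<ge> delta/diam W_delta; taking the infimum over
  the (nonempty, by recurrence) family of such U gives R(delta) \<ge> delta/diam W_delta.
*)

lemma continuous_on_unicrit_iterate: "continuous_on UNIV (unicrit d c ^^ n)"
proof (induction n)
  case 0
  then show ?case by (simp add: continuous_on_id)
next
  case (Suc n)
  have "continuous_on UNIV (unicrit d c)"
    unfolding unicrit_def by (intro continuous_intros)
  then show ?case
    using Suc by (simp add: continuous_on_compose2[of UNIV "unicrit d c"])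
qed

text \<open>Since f is proper ( |f(z)| \<ge> |z|^d - |c| ), preimages of bounded sets are bounded.\<close>

lemma bounded_vimage_unicrit:
  assumes "d \<ge> 1" "bounded S"
  shows "bounded (unicrit d c -` S)"
proof -
  obtain R where R: "\<And>x. x \<in> S \<Longrightarrow> norm x \<le> R"
    using assms(2) bounded_iff by blast
  have "norm z \<le> max 1 (R + norm c)" if "z \<in> unicrit d c -` S" for z
  proof (rule ccontr)
    assume "\<not> ?thesis"
    hence z1: "norm z > 1" and z2: "norm z > R + norm c" by auto
    have "norm z \<le> norm z ^ d"
      using z1 assms(1) by (metis less_imp_le power_increasing power_one_right)
    also have "\<dots> = norm (z ^ d)" by (simp add: norm_power)
    also have "\<dots> \<le> norm (z ^ d + c) + norm c"
      by (metis add_diff_cancel norm_triangle_ineq4)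
    also have "norm (z ^ d + c) \<le> R"
      using R that by (simp add: unicrit_def)
    finally show False using z2 by simp
  qed
  then show ?thesis unfolding bounded_iff by blast
qed

lemma bounded_vimage_unicrit_iterate:
  assumes "d \<ge> 1" "bounded S"
  shows "bounded ((unicrit d c ^^ n) -` S)"
proof (induction n)
  case 0
  then show ?case using assms by simp
next
  case (Suc n)
  have "(unicrit d c ^^ Suc n) -` S = unicrit d c -` ((unicrit d c ^^ n) -` S)"
    by (auto simp: funpow_swap1)
  then show ?case using bounded_vimage_unicrit[OF assms(1) Suc.IH] by metis
qed

lemma unicrit_iterate_Suc_0:
  assumes "d \<ge> 1"
  shows "(unicrit d c ^^ Suc n) 0 = (unicrit d c ^^ n) c"
  using assms by (simp add: funpow_Suc_right unicrit_def power_0_left del: funpow.simps)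

lemma mem_Btilde_iff:
  assumes "d \<ge> 1" "t > 0"
  shows "z \<in> Btilde d t \<longleftrightarrow> norm z ^ d < t"
proof -
  have "z \<in> Btilde d t \<longleftrightarrow> norm z < root d t" by (simp add: Btilde_def)
  also have "\<dots> \<longleftrightarrow> norm z ^ d < root d t ^ d"
    using assms by (metis norm_ge_zero power_less_imp_less_base power_strict_mono
        real_root_gt_zero less_imp_le not_one_le_zero le0 neq0_conv)
  also have "root d t ^ d = t" using assms by (simp add: real_root_pow_pos)
  finally show ?thesis .
qed

lemma Btilde_mono: "s \<le> t \<Longrightarrow> d \<ge> 1 \<Longrightarrow> Btilde d s \<subseteq> Btilde d t"
  unfolding Btilde_def by (intro subset_ball) (simp add: real_root_le_iff)

lemma vimage_ball_critical_value:
  assumes "d \<ge> 1" "t > 0"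
  shows "unicrit d c -` ball c t = Btilde d t"
proof (rule set_eqI)
  fix z
  have "dist c (unicrit d c z) = norm z ^ d"
    by (simp add: unicrit_def dist_norm norm_power)
  then show "z \<in> unicrit d c -` ball c t \<longleftrightarrow> z \<in> Btilde d t"
    using mem_Btilde_iff[OF assms, of z] by simp
qed

lemma connected_component_vimage_Btilde_bounded:
  assumes "d \<ge> 1"
  shows "bounded (connected_component_set ((unicrit d c ^^ n) -` Btilde d t) x)"
  using bounded_vimage_unicrit_iterate[OF assms, where S="Btilde d t" and c=c and n=n]
  unfolding Btilde_def by (meson bounded_ball bounded_subset connected_component_subset)

lemma pullback_Btilde_open_bounded:
  assumes "d \<ge> 1" "pullback d c n (Btilde d t) U"
  shows "open U" "bounded U" "connected U"
proof -
  have comp: "U \<in> components ((unicrit d c ^^ n) -` Btilde d t)"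
    using assms(2) unfolding pullback_def .
  have "open (Btilde d t)" by (simp add: Btilde_def)
  hence "open ((unicrit d c ^^ n) -` Btilde d t)"
    using continuous_on_unicrit_iterate[where d=d and c=c and n=n] continuous_on_open_vimage[OF open_UNIV]
    by auto
  then show "open U" using comp open_components by blast
  show "bounded U"
    using comp connected_component_vimage_Btilde_bounded[OF assms(1)]
    unfolding components_iff by blast
  show "connected U" using comp in_components_connected by blast
qed

lemma diameter_pos_open:
  fixes U :: "'a::real_normed_field set"
  assumes "open U" "bounded U" "x \<in> U"
  shows "diameter U > 0"
proof -
  obtain e where e: "e > 0" "ball x e \<subseteq> U"
    using assms open_contains_ball by blast
  have dist: "dist x (x + of_real (e/2)) = e/2"
    using e by (simp add: dist_norm)
  hence "x + of_real (e/2) \<in> U" using e by auto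
  hence "dist x (x + of_real (e/2)) \<le> diameter U"
    using diameter_bounded_bound[OF assms(2,3)] by blast
  then show ?thesis using e dist by simp
qed

text \<open>For the recurrent critical point the family defining R(delta) is nonempty: some
  f^(k+1)(0) = f^k(c) lies in B~(delta), so c lies in a pull-back of B~(delta) by f^k.\<close>

lemma pullback_through_critical_value_exists:
  assumes "d \<ge> 1" "\<delta> > 0" "crit_recurrent d c"
  shows "\<exists>U n. pullback d c n (Btilde d \<delta>) U \<and> c \<in> U"
proof -
  have "root d \<delta> > 0" using assms by simp
  then obtain n where n: "n > 0" "norm ((unicrit d c ^^ n) 0) < root d \<delta>"
    using assms(3) unfolding crit_recurrent_def by blast
  then obtain k where k: "n = Suc k" using not0_implies_Suc by blast
  have "(unicrit d c ^^ k) c = (unicrit d c ^^ n) 0"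
    unfolding k by (rule unicrit_iterate_Suc_0[OF assms(1), symmetric])
  hence c_in: "c \<in> (unicrit d c ^^ k) -` Btilde d \<delta>"
    using n(2) by (simp add: Btilde_def)
  have "pullback d c k (Btilde d \<delta>) (connected_component_set ((unicrit d c ^^ k) -` Btilde d \<delta>) c)"
    unfolding pullback_def using c_in by (rule componentsI)
  moreover have "c \<in> connected_component_set ((unicrit d c ^^ k) -` Btilde d \<delta>) c"
    using c_in by simp
  ultimately show ?thesis by blast
qed

definition contracts :: "nat \<Rightarrow> complex \<Rightarrow> real \<Rightarrow> real \<Rightarrow> bool" where
  "contracts d c \<delta> r \<longleftrightarrow>
     (\<forall>W n. pullback d c n (Btilde d (\<delta> * r)) W \<and> infdist c W \<le> \<delta> \<longrightarrow> diameter W < \<delta>)"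

lemma contracts_of_rfun_gt_1:
  assumes "rfun d c \<delta> > 1"
  shows "\<exists>r > 1. contracts d c \<delta> r"
proof -
  have "ereal 1 < Sup (ereal ` {r. r > 0 \<and> contracts d c \<delta> r})"
    using assms by (simp add: rfun_def contracts_def one_ereal_def)
  then show ?thesis by (auto simp: less_Sup_iff)
qed

lemma connected_pullback_near_critical_value:
  assumes d: "d \<ge> 1" and "\<delta> > 0" and contr: "contracts d c \<delta> r" and "r \<ge> 1"
    and T: "connected T" "T \<subseteq> (unicrit d c ^^ j) -` Btilde d \<delta>"
    and p: "p \<in> T" "dist c p \<le> \<delta>"
  shows "T \<subseteq> ball c (2 * \<delta>)"
proof
  fix y assume "y \<in> T"
  define B' where "B' = Btilde d (\<delta> * r)"
  define V where "V = connected_component_set ((unicrit d c ^^ j) -` B') p"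
  have "Btilde d \<delta> \<subseteq> B'"
    unfolding B'_def using assms by (intro Btilde_mono) auto
  hence T_sub: "T \<subseteq> (unicrit d c ^^ j) -` B'"
    using T(2) by blast
  hence TV: "T \<subseteq> V"
    unfolding V_def using connected_component_maximal[OF p(1) T(1)] by blast
  have "pullback d c j B' V"
    unfolding pullback_def V_def using T_sub p(1) by (intro componentsI) blast
  moreover have "infdist c V \<le> \<delta>"
    using infdist_le[of p V c] TV p by auto
  ultimately have "diameter V < \<delta>"
    using contr unfolding contracts_def B'_def by blast
  moreover have "dist p y \<le> diameter V"
    using diameter_bounded_bound[of V p y] connected_component_vimage_Btilde_bounded[OF d]
      TV p(1) \<open>y \<in> T\<close> unfolding V_def B'_def by blast
  ultimately show "y \<in> ball c (2 * \<delta>)"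
    using p(2) dist_triangle[of c y p] by simp
qed

lemma nfun_le:
  assumes "(unicrit d c ^^ Suc n) 0 \<in> Btilde d \<delta>"
  shows "1 \<le> nfun d c \<delta>" "nfun d c \<delta> \<le> Suc n"
    "(unicrit d c ^^ nfun d c \<delta>) 0 \<in> Btilde d \<delta>"
  using assms unfolding nfun_def
  by (auto intro: LeastI2[of _ "Suc n"] Least_le)

text \<open>The key inclusion: with N = n(delta), f^(N-1) maps U into B~(2 delta).  Either
  N-1 = n and this is immediate, or f^N(U) is a connected set close to c inside the
  f^(n-N)-preimage of B~(delta), to which contraction applies.\<close>

lemma pullback_through_critical_value_subset_W:
  assumes d: "d \<ge> 1" and \<delta>: "\<delta> > 0" and contr: "contracts d c \<delta> r" "r \<ge> 1"
    and U: "pullback d c n (Btilde d \<delta>) U" "c \<in> U"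
  shows "U \<subseteq> Wset d c \<delta>"
proof -
  define F where "F = (\<lambda>k. unicrit d c ^^ k)"
  define m where "m = nfun d c \<delta> - 1"
  have UF: "U \<subseteq> F n -` Btilde d \<delta>"
    using U(1) in_components_subset unfolding pullback_def F_def by blast
  have Ucon: "connected U"
    using pullback_Btilde_open_bounded[OF d U(1)] by simp
  have "F (Suc n) 0 \<in> Btilde d \<delta>"
    using UF U(2) unicrit_iterate_Suc_0[OF d] unfolding F_def by auto
  from nfun_le[OF this[unfolded F_def]]
  have mn: "m \<le> n" and Fm: "F m c \<in> Btilde d \<delta>"
    using unicrit_iterate_Suc_0[OF d, of m c] by (auto simp: m_def F_def Suc_diff_1)
  have "F m ` U \<subseteq> Btilde d (2 * \<delta>)"
  proof (cases "m = n")
    case True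
    then show ?thesis using UF Btilde_mono[of \<delta> "2 * \<delta>" d] \<delta> d by auto
  next
    case False
    define j where "j = n - Suc m"
    have n: "n = j + Suc m" using False mn unfolding j_def by simp
    have Fn: "F n = F j \<circ> unicrit d c \<circ> F m"
      unfolding F_def n by (simp only: funpow_add funpow.simps(2) comp_assoc)
    have "unicrit d c ` F m ` U \<subseteq> ball c (2 * \<delta>)"
    proof (rule connected_pullback_near_critical_value[OF d \<delta> contr])
      have "continuous_on U (unicrit d c ^^ Suc m)"
        using continuous_on_unicrit_iterate continuous_on_subset by blast
      then show "connected (unicrit d c ` F m ` U)"
        using connected_continuous_image[OF _ Ucon] unfolding F_def by (simp add: image_comp)
      show "unicrit d c ` F m ` U \<subseteq> (unicrit d c ^^ j) -` Btilde d \<delta>"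
        using UF Fn unfolding F_def by auto
      show "unicrit d c (F m c) \<in> unicrit d c ` F m ` U" using U(2) by simp
      show "dist c (unicrit d c (F m c)) \<le> \<delta>"
        using Fm mem_Btilde_iff[OF d \<delta>]
        by (simp add: unicrit_def dist_norm norm_power)
    qed
    then show ?thesis
      using vimage_ball_critical_value[OF d, of "2 * \<delta>" c] \<delta> by auto
  qed
  then show ?thesis
    unfolding Wset_def m_def[symmetric] F_def
    by (intro connected_component_maximal[OF U(2) Ucon]) auto
qed

text \<open>Each quotient delta/diam U in the infimum defining R(delta) is at least
  delta/diam W_delta, because U \<subseteq> W_delta and diam U > 0.\<close>

lemma Rfun_lower_bound:
  assumes d: "d \<ge> 1" and \<delta>: "\<delta> > 0" and rec: "crit_recurrent d c"
    and contr: "contracts d c \<delta> r" "r \<ge> 1"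
  shows "Rfun d c \<delta> \<ge> \<delta> / diameter (Wset d c \<delta>)"
  unfolding Rfun_def
proof (rule cInf_greatest)
  show "{\<delta> / diameter U | U n. pullback d c n (Btilde d \<delta>) U \<and> c \<in> U} \<noteq> {}"
    using pullback_through_critical_value_exists[OF d \<delta> rec] by blast
next
  fix x assume "x \<in> {\<delta> / diameter U | U n. pullback d c n (Btilde d \<delta>) U \<and> c \<in> U}"
  then obtain U n where x: "x = \<delta> / diameter U"
    and U: "pullback d c n (Btilde d \<delta>) U" "c \<in> U" by blast
  have "diameter U \<le> diameter (Wset d c \<delta>)"
    using pullback_through_critical_value_subset_W[OF d \<delta> contr U]
      connected_component_vimage_Btilde_bounded[OF d]
    unfolding Wset_def by (rule diameter_subset)
  moreover have "diameter U > 0"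
    using pullback_Btilde_open_bounded[OF d U(1)] U(2) diameter_pos_open by blast
  ultimately show "\<delta> / diameter (Wset d c \<delta>) \<le> x"
    unfolding x using \<delta> by (simp add: divide_left_mono)
qed

theorem lemma4p3:
  fixes d :: nat and c :: complex
  assumes "d \<ge> 2"
    and "crit_nonperiodic d c"
    and "crit_recurrent d c"
    and "backward_contracting d c"
  shows "\<forall>\<^sub>F \<delta> in at_right (0::real). Rfun d c \<delta> \<ge> \<delta> / diameter (Wset d c \<delta>)"
proof -
  have "\<forall>\<^sub>F \<delta> in at_right (0::real). rfun d c \<delta> > 1"
    using assms(4) unfolding backward_contracting_def
    by (rule order_tendstoD(1)) simp
  moreover have "\<forall>\<^sub>F \<delta> in at_right (0::real). \<delta> > 0"
    by (rule eventually_at_right_less)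
  ultimately show ?thesis
  proof eventually_elim
    case (elim \<delta>)
    then obtain r where "r > 1" "contracts d c \<delta> r"
      using contracts_of_rfun_gt_1 by blast
    then show ?case
      using Rfun_lower_bound[of d \<delta> c r] elim assms(1,3) by simp
  qed
qed

end
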